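(* Let $v$ be the last installed view in the system, i.e., $lastview=v$. If a correct server $s$ requests to change view $v$ to view $v.succ$, then at least a weighted majority of correct servers, including $s$, eventually install $v.succ$.
   Context: System: servers $S=\{s_1,\dots,s_n\}$; reliable links, message passing; asynchronous; crash failures only (a server is correct if it does not crash); at most $f$ servers crash and $2f+1\le n$. Views form a sequence $v_0,v_1,\dots$ with $v_{k+1}=v_k.succ$; $v<w$ means $w$ is obtained from $v$ by applying $succ$ one or more times. Each server $s$ has a current view $s.cview$ (initially $v_0$) and a weight in each view; in every view each server's weight is strictly between $\mathbb{wl}=n/(2(n-f))$ and $\mathbb{wu}=n/(2f)$ and the total weight is at most $n$. A weighted majority for view $v$ is a set of servers whose weights in $v$ sum to more than $n/2$. View changer run by each server $s$ with $s.cview=v$: when a local timeout for $v$ expires it requests the change by sending $\langle\text{change\_view},v.succ\rangle$ to all servers; once it has received or sent change\_view for $v.succ$ it forwards it if not already sent, disables read/write operations, sends $\langle\text{state\_update},(val,ts,cid),v,w\rangle$ to all servers (its register state and weight $w$ in $v$) — at this point it has uninstalled $v$ — waits until it has state\_update messages for view $v$ whose weights sum to more than $n/2$, adopts the value with lexicographically largest $(ts,cid)$, then sets $s.cview\leftarrow v.succ$ (installs $v.succ$) and re-enables read/write operations. A view $v$ is installed in the system once at least one server installs $v$ and every server $s$ satisfies $s.cview\le v$; $lastview$ denotes the last view installed in the system. *)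

theory Defs
  imports Complex_Main
begin

text \<open>Model of the view changer. Servers are the naturals 0,...,n-1; views are
  naturals (view v_k is k, succ is Suc, and v < w is the order on nat).
  A register state is (val, ts, cid).\<close>

datatype 'val msg =
    ChangeView nat
  | StateUpdate "'val \<times> nat \<times> nat" nat real  \<comment> \<open>state_update, register state, view, weight\<close>

record 'val lstate =
  cview :: nat
  crashed :: bool
  ops_enabled :: bool
  reg :: "'val \<times> nat \<times> nat"
  cv_sent :: "nat set"
  cv_rcvd :: "nat set"
  su_sent :: "nat set"     \<comment> \<open>views for which state_update was sent (uninstalled views)\<close>
  su_rcvd :: "(nat \<times> ('val \<times> nat \<times> nat) \<times> nat \<times> real) set"
                           \<comment> \<open>received state_updates: (sender, register state, view, weight)\<close>

record 'val gstate =
  loc :: "nat \<Rightarrow> 'val lstate"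
  net :: "(nat \<times> nat \<times> 'val msg) set"   \<comment> \<open>messages in transit: (source, destination, msg)\<close>

datatype 'val event =
    Timeout nat | Deliver nat nat "'val msg" | Uninstall nat | Install nat
  | Op nat | Crash nat | Idle

definition send_all :: "nat \<Rightarrow> nat \<Rightarrow> 'val msg \<Rightarrow> (nat \<times> nat \<times> 'val msg) set" where
  "send_all n src m = {(src, d, m) | d. d < n}"

fun recv :: "nat \<Rightarrow> 'val msg \<Rightarrow> 'val lstate \<Rightarrow> 'val lstate" where
  "recv src (ChangeView u) l = l\<lparr>cv_rcvd := insert u (cv_rcvd l)\<rparr>"
| "recv src (StateUpdate r u wt) l = l\<lparr>su_rcvd := insert (src, r, u, wt) (su_rcvd l)\<rparr>"

fun lex_le :: "nat \<times> nat \<Rightarrow> nat \<times> nat \<Rightarrow> bool" where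
  "lex_le (a, b) (c, d) = (a < c \<or> (a = c \<and> b \<le> d))"

definition su_weight :: "'val lstate \<Rightarrow> nat \<Rightarrow> real" where
  "su_weight l v = (\<Sum>m \<in> {m \<in> su_rcvd l. fst (snd (snd m)) = v}. snd (snd (snd m)))"

fun step :: "nat \<Rightarrow> (nat \<Rightarrow> nat \<Rightarrow> real) \<Rightarrow> 'val gstate \<Rightarrow> 'val event \<Rightarrow> 'val gstate \<Rightarrow> bool" where
  "step n w g (Timeout s) g' =
     (let l = loc g s; v = cview l in
      s < n \<and> \<not> crashed l \<and>
      g' = g\<lparr>loc := (loc g)(s := l\<lparr>cv_sent := insert (Suc v) (cv_sent l)\<rparr>),
             net := net g \<union> send_all n s (ChangeView (Suc v))\<rparr>)"
| "step n w g (Deliver src dst m) g' =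
     ((src, dst, m) \<in> net g \<and>
      g' = g\<lparr>loc := (loc g)(dst := recv src m (loc g dst)), net := net g - {(src, dst, m)}\<rparr>)"
| "step n w g (Uninstall s) g' =
     (let l = loc g s; v = cview l in
      s < n \<and> \<not> crashed l \<and> Suc v \<in> cv_sent l \<union> cv_rcvd l \<and> v \<notin> su_sent l \<and>
      g' = g\<lparr>loc := (loc g)(s := l\<lparr>cv_sent := insert (Suc v) (cv_sent l), ops_enabled := False,
                                    su_sent := insert v (su_sent l)\<rparr>),
             net := net g \<union> (if Suc v \<in> cv_sent l then {} else send_all n s (ChangeView (Suc v)))
                          \<union> send_all n s (StateUpdate (reg l) v (w v s))\<rparr>)"
| "step n w g (Install s) g' =
     (let l = loc g s; v = cview l in
      s < n \<and> \<not> crashed l \<and> v \<in> su_sent l \<and> su_weight l v > real n / 2 \<and>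
      (\<exists>q r wt. (q, r, v, wt) \<in> su_rcvd l \<and>
         (\<forall>q' r' wt'. (q', r', v, wt') \<in> su_rcvd l \<longrightarrow> lex_le (snd r') (snd r)) \<and>
         g' = g\<lparr>loc := (loc g)(s := l\<lparr>cview := Suc v, ops_enabled := True, reg := r\<rparr>)\<rparr>))"
| "step n w g (Op s) g' =
     (let l = loc g s in
      s < n \<and> \<not> crashed l \<and> ops_enabled l \<and>
      (\<exists>r. g' = g\<lparr>loc := (loc g)(s := l\<lparr>reg := r\<rparr>)\<rparr>))"
| "step n w g (Crash s) g' =
     (s < n \<and> g' = g\<lparr>loc := (loc g)(s := (loc g s)\<lparr>crashed := True\<rparr>)\<rparr>)"
| "step n w g Idle g' = (g' = g)"

definition init_state :: "('val \<times> nat \<times> nat) \<Rightarrow> 'val gstate" where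
  "init_state r0 = \<lparr>loc = (\<lambda>q. \<lparr>cview = 0, crashed = False, ops_enabled = True, reg = r0,
       cv_sent = {}, cv_rcvd = {}, su_sent = {}, su_rcvd = {}\<rparr>), net = {}\<rparr>"

definition enabled :: "nat \<Rightarrow> (nat \<Rightarrow> nat \<Rightarrow> real) \<Rightarrow> 'val gstate \<Rightarrow> 'val event \<Rightarrow> bool" where
  "enabled n w g e = (\<exists>g'. step n w g e g')"

text \<open>An (infinite, asynchronous) execution: starts in the initial state, every step is a
  transition, reliable links (every message in transit to a non-crashing server is eventually
  delivered) and weak fairness for the local actions of the view changer.\<close>
definition correct :: "nat \<Rightarrow> (nat \<Rightarrow> 'val gstate) \<Rightarrow> nat \<Rightarrow> bool" where
  "correct n \<sigma> q = (q < n \<and> (\<forall>t. \<not> crashed (loc (\<sigma> t) q)))"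

definition execution :: "nat \<Rightarrow> (nat \<Rightarrow> nat \<Rightarrow> real) \<Rightarrow> ('val \<times> nat \<times> nat)
    \<Rightarrow> (nat \<Rightarrow> 'val gstate) \<Rightarrow> (nat \<Rightarrow> 'val event) \<Rightarrow> bool" where
  "execution n w r0 \<sigma> lab =
     (\<sigma> 0 = init_state r0 \<and>
      (\<forall>t. step n w (\<sigma> t) (lab t) (\<sigma> (Suc t))) \<and>
      (\<forall>t src dst m. (src, dst, m) \<in> net (\<sigma> t) \<and> correct n \<sigma> dst \<longrightarrow>
          (\<exists>t'\<ge>t. lab t' = Deliver src dst m)) \<and>
      (\<forall>s t0. (\<forall>t\<ge>t0. enabled n w (\<sigma> t) (Uninstall s)) \<longrightarrow> (\<exists>t\<ge>t0. lab t = Uninstall s)) \<and>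
      (\<forall>s t0. (\<forall>t\<ge>t0. enabled n w (\<sigma> t) (Install s)) \<longrightarrow> (\<exists>t\<ge>t0. lab t = Install s)))"

definition sys_installed :: "nat \<Rightarrow> 'val gstate \<Rightarrow> nat \<Rightarrow> bool" where
  "sys_installed n g v = ((\<exists>q<n. cview (loc g q) = v) \<and> (\<forall>q<n. cview (loc g q) \<le> v))"

end

theory Submission
  imports Defs "HOL-Library.Product_Lexorder"
begin

text \<open>Since at most f servers crash and every weight exceeds n/(2(n-f)), the correct servers
  alone form a weighted majority (this is the only use of the weight bounds). Reliable links
  deliver every broadcast to every correct server, and weak fairness makes a correct server
  uninstall its view once it has received change_view, and install the next view once it has
  also received state updates of weight above n/2 for it.

  By induction on u, every correct server reaches every view u \<le> v: some server reached v, so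
  some server installed u + 1, having broadcast change_view for u + 1 and received a weighted
  majority of state updates for u; both reach every correct server, which therefore installs
  u + 1 as well. Finally the timeout of s broadcasts change_view for v + 1, so every correct
  server uninstalls v and broadcasts its state update; these updates of the correct servers
  are a weighted majority, hence every correct server installs v + 1, necessarily after time
  t because no server was beyond view v then.\<close>

lemma recv_simps [simp]:
  "cview (recv src m l) = cview l" "crashed (recv src m l) = crashed l"
  "cv_sent (recv src m l) = cv_sent l" "su_sent (recv src m l) = su_sent l"
  "cv_rcvd (recv src m l) = (case m of ChangeView u \<Rightarrow> insert u (cv_rcvd l) | _ \<Rightarrow> cv_rcvd l)"
  "su_rcvd (recv src m l) =
     (case m of StateUpdate r u wt \<Rightarrow> insert (src, r, u, wt) (su_rcvd l) | _ \<Rightarrow> su_rcvd l)"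
  by (cases m; simp)+

lemma step_mono:
  assumes "step n w g e g'"
  shows "cv_sent (loc g q) \<subseteq> cv_sent (loc g' q)" and "cv_rcvd (loc g q) \<subseteq> cv_rcvd (loc g' q)"
    and "su_sent (loc g q) \<subseteq> su_sent (loc g' q)" and "su_rcvd (loc g q) \<subseteq> su_rcvd (loc g' q)"
  using assms by (cases e; auto simp: Let_def split: msg.splits; fail)+

lemma step_cview:
  assumes "step n w g e g'"
  shows "cview (loc g' q) = cview (loc g q) \<or> e = Install q \<and> cview (loc g' q) = Suc (cview (loc g q))"
  using assms by (cases e; auto simp: Let_def split: if_splits msg.splits)

lemma step_new_message:
  assumes "step n w g e g'" "(src, d, m) \<in> net g'" "(src, d, m) \<notin> net g"
  shows "send_all n src m \<subseteq> net g' \<and> src < n \<and> (\<forall>r u wt. m = StateUpdate r u wt \<longrightarrow> wt = w u src)"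
  using assms by (cases e; auto simp: Let_def send_all_def split: if_splits msg.splits)

lemma step_new_su_rcvd:
  assumes "step n w g e g'" "(src, r, u, wt) \<in> su_rcvd (loc g' q)" "(src, r, u, wt) \<notin> su_rcvd (loc g q)"
  shows "(src, q, StateUpdate r u wt) \<in> net g"
  using assms by (cases e; auto simp: Let_def split: if_splits msg.splits)

lemma step_new_cv_sent:
  assumes "step n w g e g'" "x \<in> cv_sent (loc g' p)" "x \<notin> cv_sent (loc g p)"
  shows "send_all n p (ChangeView x) \<subseteq> net g'"
  using assms by (cases e; auto simp: Let_def split: if_splits msg.splits)

lemma step_new_su_sent:
  assumes "step n w g e g'" "u \<in> su_sent (loc g' p)" "u \<notin> su_sent (loc g p)"
  shows "Suc u \<in> cv_sent (loc g' p) \<and> send_all n p (StateUpdate (reg (loc g p)) u (w u p)) \<subseteq> net g'"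
  using assms by (cases e; auto simp: Let_def split: if_splits msg.splits)

lemma step_su_rcvd_finite:
  "step n w g e g' \<Longrightarrow> finite (su_rcvd (loc g q)) \<Longrightarrow> finite (su_rcvd (loc g' q))"
  by (cases e; auto simp: Let_def split: msg.splits)

lemma lex_le_iff_less_eq: "lex_le a b \<longleftrightarrow> a \<le> b"
  by (cases a; cases b) auto

lemma Install_enabled:
  assumes "q < n" "\<not> crashed (loc g q)" "cview (loc g q) \<in> su_sent (loc g q)"
    and "real n / 2 < su_weight (loc g q) (cview (loc g q))" "finite (su_rcvd (loc g q))"
  shows "enabled n w g (Install q)"
proof -
  define l where "l = loc g q"
  define A where "A = {m \<in> su_rcvd l. fst (snd (snd m)) = cview l}"
  let ?key = "\<lambda>m. snd (fst (snd m))"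
  have "finite A" using assms(5) by (simp add: A_def l_def)
  moreover have "A \<noteq> {}"
  proof
    assume "A = {}"
    then have "su_weight l (cview l) = 0" unfolding su_weight_def A_def[symmetric] by simp
    with assms(4) show False by (simp add: l_def)
  qed
  ultimately have "Max (?key ` A) \<in> ?key ` A" by simp
  then obtain a where "a \<in> A" and a_max: "?key a = Max (?key ` A)" by auto
  have "\<forall>b\<in>A. ?key b \<le> ?key a" using \<open>finite A\<close> by (auto simp: a_max intro: Max_ge)
  moreover obtain q' r u wt where "a = (q', r, u, wt)" by (cases a)
  ultimately have "(q', r, cview l, wt) \<in> su_rcvd l"
    and "\<forall>q'' r' wt'. (q'', r', cview l, wt') \<in> su_rcvd l \<longrightarrow> lex_le (snd r') (snd r)"
    using \<open>a \<in> A\<close> by (auto simp: A_def lex_le_iff_less_eq)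
  then show ?thesis
    using assms(1-4) unfolding enabled_def step.simps Let_def l_def by blast
qed

lemma sum_le_su_weight:
  assumes "finite (su_rcvd l)" "S \<subseteq> su_rcvd l" "\<forall>m\<in>S. fst (snd (snd m)) = u"
    and "\<forall>m\<in>su_rcvd l. 0 \<le> snd (snd (snd m))"
  shows "(\<Sum>m\<in>S. snd (snd (snd m))) \<le> su_weight l u"
  unfolding su_weight_def by (rule sum_mono2) (use assms in auto)

lemma weighted_majority:
  fixes x :: "'a \<Rightarrow> real"
  assumes "f < n" "finite C" "n \<le> card C + f"
    and "\<forall>q\<in>C. real n / (2 * (real n - real f)) < x q"
  shows "real n / 2 < sum x C"
proof -
  let ?lb = "real n / (2 * (real n - real f))"
  have "C \<noteq> {}" using assms(1,3) by auto
  have "real n / 2 = (real n - real f) * ?lb" using assms(1) by (simp add: field_simps)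
  also have "\<dots> \<le> real (card C) * ?lb" using assms(1,3) by (intro mult_right_mono) auto
  also have "\<dots> = (\<Sum>q\<in>C. ?lb)" by simp
  also have "\<dots> < sum x C" using \<open>C \<noteq> {}\<close> assms(2,4) by (intro sum_strict_mono) auto
  finally show ?thesis .
qed

lemma card_correct_ge:
  assumes "card {q. q < n \<and> (\<exists>t. crashed (loc (\<sigma> t) q))} \<le> f"
  shows "n \<le> card {q. correct n \<sigma> q} + f"
proof -
  let ?A = "{q. correct n \<sigma> q}" and ?B = "{q. q < n \<and> (\<exists>t. crashed (loc (\<sigma> t) q))}"
  have "{..<n} = ?A \<union> ?B" by (auto simp: correct_def)
  then have "n = card (?A \<union> ?B)" by (metis card_lessThan)
  also have "\<dots> \<le> card ?A + card ?B" by (rule card_Un_le)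
  finally show ?thesis using assms by linarith
qed

locale view_change_execution =
  fixes n :: nat and w :: "nat \<Rightarrow> nat \<Rightarrow> real" and r0 :: "'val \<times> nat \<times> nat"
    and \<sigma> :: "nat \<Rightarrow> 'val gstate" and lab :: "nat \<Rightarrow> 'val event"
  assumes execution: "execution n w r0 \<sigma> lab"
    and weights_nonneg: "\<And>u q. q < n \<Longrightarrow> 0 \<le> w u q"
begin

lemma initial_state: "\<sigma> 0 = init_state r0"
  using execution by (simp add: execution_def)

lemma transition: "step n w (\<sigma> t) (lab t) (\<sigma> (Suc t))"
  using execution by (simp add: execution_def)

lemma reliable_delivery:
  "(src, dst, m) \<in> net (\<sigma> t) \<Longrightarrow> correct n \<sigma> dst \<Longrightarrow> \<exists>t'\<ge>t. lab t' = Deliver src dst m"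
  using execution by (simp add: execution_def)

lemma Uninstall_fair: "\<forall>t\<ge>t0. enabled n w (\<sigma> t) (Uninstall q) \<Longrightarrow> \<exists>t\<ge>t0. lab t = Uninstall q"
  using execution by (simp add: execution_def)

lemma Install_fair: "\<forall>t\<ge>t0. enabled n w (\<sigma> t) (Install q) \<Longrightarrow> \<exists>t\<ge>t0. lab t = Install q"
  using execution by (simp add: execution_def)

definition broadcast :: "nat \<Rightarrow> 'val msg \<Rightarrow> bool" where
  "broadcast src m \<longleftrightarrow> (\<forall>d<n. \<exists>t. (src, d, m) \<in> net (\<sigma> t))"

lemma broadcastI: "send_all n src m \<subseteq> net (\<sigma> t) \<Longrightarrow> broadcast src m"
  by (auto simp: broadcast_def send_all_def)

lemma net_broadcast:
  "(src, d, m) \<in> net (\<sigma> t) \<Longrightarrow>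
     broadcast src m \<and> src < n \<and> (\<forall>r u wt. m = StateUpdate r u wt \<longrightarrow> wt = w u src)"
proof (induction t)
  case 0
  then show ?case by (simp add: initial_state init_state_def)
next
  case (Suc t)
  then show ?case using step_new_message[OF transition] broadcastI by blast
qed

lemma su_rcvd_broadcast:
  "(src, r, u, wt) \<in> su_rcvd (loc (\<sigma> t) q) \<Longrightarrow>
     broadcast src (StateUpdate r u wt) \<and> src < n \<and> wt = w u src"
proof (induction t)
  case 0
  then show ?case by (simp add: initial_state init_state_def)
next
  case (Suc t)
  then show ?case using step_new_su_rcvd[OF transition] net_broadcast by blast
qed

lemma su_rcvd_weight_nonneg: "m \<in> su_rcvd (loc (\<sigma> t) q) \<Longrightarrow> 0 \<le> snd (snd (snd m))"
  by (cases m) (use su_rcvd_broadcast weights_nonneg in fastforce)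

lemma su_rcvd_finite: "finite (su_rcvd (loc (\<sigma> t) q))"
  by (induction t) (auto simp: initial_state init_state_def intro: step_su_rcvd_finite[OF transition])

lemma cv_sent_broadcast: "x \<in> cv_sent (loc (\<sigma> t) p) \<Longrightarrow> broadcast p (ChangeView x)"
proof (induction t)
  case 0
  then show ?case by (simp add: initial_state init_state_def)
next
  case (Suc t)
  then show ?case using step_new_cv_sent[OF transition] broadcastI by blast
qed

lemma su_sent_broadcast:
  "u \<in> su_sent (loc (\<sigma> t) p) \<Longrightarrow>
     Suc u \<in> cv_sent (loc (\<sigma> t) p) \<and> (\<exists>r. broadcast p (StateUpdate r u (w u p)))"
proof (induction t)
  case 0
  then show ?case by (simp add: initial_state init_state_def)
next
  case (Suc t)
  then show ?case
    using step_new_su_sent[OF transition] step_mono(1)[OF transition] broadcastI by blast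
qed

lemma cv_rcvd_mono: "t \<le> t' \<Longrightarrow> cv_rcvd (loc (\<sigma> t) q) \<subseteq> cv_rcvd (loc (\<sigma> t') q)"
  by (rule lift_Suc_mono_le[of "\<lambda>t. cv_rcvd (loc (\<sigma> t) q)", OF step_mono(2)[OF transition]])

lemma su_sent_mono: "t \<le> t' \<Longrightarrow> su_sent (loc (\<sigma> t) q) \<subseteq> su_sent (loc (\<sigma> t') q)"
  by (rule lift_Suc_mono_le[of "\<lambda>t. su_sent (loc (\<sigma> t) q)", OF step_mono(3)[OF transition]])

lemma su_rcvd_mono: "t \<le> t' \<Longrightarrow> su_rcvd (loc (\<sigma> t) q) \<subseteq> su_rcvd (loc (\<sigma> t') q)"
  by (rule lift_Suc_mono_le[of "\<lambda>t. su_rcvd (loc (\<sigma> t) q)", OF step_mono(4)[OF transition]])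

lemma cview_mono: "t \<le> t' \<Longrightarrow> cview (loc (\<sigma> t) q) \<le> cview (loc (\<sigma> t') q)"
proof (rule lift_Suc_mono_le[of "\<lambda>t. cview (loc (\<sigma> t) q)"])
  show "cview (loc (\<sigma> k) q) \<le> cview (loc (\<sigma> (Suc k)) q)" for k
    using step_cview[OF transition, of k q] by auto
qed

lemma Install_transition:
  assumes "lab t = Install p"
  shows "cview (loc (\<sigma> (Suc t)) p) = Suc (cview (loc (\<sigma> t) p))"
    and "cview (loc (\<sigma> t) p) \<in> su_sent (loc (\<sigma> t) p)"
    and "real n / 2 < su_weight (loc (\<sigma> t) p) (cview (loc (\<sigma> t) p))"
  using transition[of t] assms by (auto simp: Let_def)

lemma Install_of_passed_view:
  assumes "cview (loc (\<sigma> a) p) \<le> u" "u < cview (loc (\<sigma> b) p)"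
  shows "\<exists>c. a \<le> c \<and> c < b \<and> cview (loc (\<sigma> c) p) = u \<and> lab c = Install p"
  using assms(2)
proof (induction b)
  case 0
  then show ?case using cview_mono[of 0 a p] assms(1) by simp
next
  case (Suc b)
  show ?case
  proof (cases "u < cview (loc (\<sigma> b) p)")
    case True
    then show ?thesis using Suc.IH by (meson less_SucI)
  next
    case False
    have "a \<le> b"
    proof (rule ccontr)
      assume "\<not> a \<le> b"
      then show False using cview_mono[of "Suc b" a p] assms(1) Suc.prems by simp
    qed
    moreover have "lab b = Install p" "cview (loc (\<sigma> b) p) = u"
      using step_cview[OF transition, of b p] False Suc.prems by auto
    ultimately show ?thesis by auto
  qed
qed

lemma delivered_to_correct:
  assumes "correct n \<sigma> q" "broadcast p m"
  shows "\<exists>t. lab t = Deliver p q m"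
  using assms reliable_delivery by (fastforce simp: broadcast_def correct_def)

lemma receives_ChangeView:
  assumes "correct n \<sigma> q" "broadcast p (ChangeView x)"
  shows "\<exists>t. x \<in> cv_rcvd (loc (\<sigma> t) q)"
proof -
  obtain t where "lab t = Deliver p q (ChangeView x)" using delivered_to_correct[OF assms] by blast
  then have "x \<in> cv_rcvd (loc (\<sigma> (Suc t)) q)" using transition[of t] by auto
  then show ?thesis ..
qed

lemma receives_StateUpdate:
  assumes "correct n \<sigma> q" "broadcast p (StateUpdate r u wt)"
  shows "\<exists>t. (p, r, u, wt) \<in> su_rcvd (loc (\<sigma> t) q)"
proof -
  obtain t where "lab t = Deliver p q (StateUpdate r u wt)" using delivered_to_correct[OF assms] by blast
  then have "(p, r, u, wt) \<in> su_rcvd (loc (\<sigma> (Suc t)) q)" using transition[of t] by auto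
  then show ?thesis ..
qed

lemma receives_StateUpdates:
  assumes "correct n \<sigma> q" "finite S" "\<forall>(src, r, u, wt)\<in>S. broadcast src (StateUpdate r u wt)"
  shows "\<exists>t. S \<subseteq> su_rcvd (loc (\<sigma> t) q)"
  using assms(2,3)
proof (induction S rule: finite_induct)
  case empty
  then show ?case by simp
next
  case (insert m S)
  obtain t1 where "S \<subseteq> su_rcvd (loc (\<sigma> t1) q)" using insert by auto
  moreover have "\<exists>t2. m \<in> su_rcvd (loc (\<sigma> t2) q)"
    using receives_StateUpdate[OF assms(1)] insert.prems by (cases m) fastforce
  then obtain t2 where "m \<in> su_rcvd (loc (\<sigma> t2) q)" ..
  ultimately have "insert m S \<subseteq> su_rcvd (loc (\<sigma> (max t1 t2)) q)"
    using su_rcvd_mono[of t1 "max t1 t2" q] su_rcvd_mono[of t2 "max t1 t2" q] by auto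
  then show ?case ..
qed

lemma eventually_uninstalls:
  assumes q: "correct n \<sigma> q" and view: "cview (loc (\<sigma> t1) q) = u"
    and cv: "Suc u \<in> cv_rcvd (loc (\<sigma> t2) q)"
  shows "\<exists>t. u \<in> su_sent (loc (\<sigma> t) q)"
proof (cases "\<forall>t\<ge>t1. cview (loc (\<sigma> t) q) = u")
  case False
  then obtain t where "t1 \<le> t" "cview (loc (\<sigma> t) q) \<noteq> u" by blast
  then have "u < cview (loc (\<sigma> t) q)" using cview_mono[of t1 t q] view by simp
  then obtain c where "cview (loc (\<sigma> c) q) = u" "lab c = Install q"
    using Install_of_passed_view[of t1 q u t] view by auto
  then show ?thesis using Install_transition(2) by metis
next
  case stuck: True
  show ?thesis
  proof (rule ccontr)
    assume never: "\<not> ?thesis"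
    have "enabled n w (\<sigma> t) (Uninstall q)" if "max t1 t2 \<le> t" for t
    proof -
      have "Suc u \<in> cv_rcvd (loc (\<sigma> t) q)" using cv cv_rcvd_mono[of t2 t q] that by auto
      then show ?thesis using q stuck never that by (auto simp: enabled_def correct_def Let_def)
    qed
    then obtain t where "max t1 t2 \<le> t" "lab t = Uninstall q" using Uninstall_fair by blast
    then have "u \<in> su_sent (loc (\<sigma> (Suc t)) q)" using transition[of t] stuck by (auto simp: Let_def)
    with never show False by blast
  qed
qed

lemma eventually_installs_next_view:
  assumes q: "correct n \<sigma> q" and view: "cview (loc (\<sigma> t1) q) = u"
    and cv: "Suc u \<in> cv_rcvd (loc (\<sigma> t2) q)"
    and S: "S \<subseteq> su_rcvd (loc (\<sigma> t3) q)" "\<forall>m\<in>S. fst (snd (snd m)) = u"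
    and majority: "real n / 2 < (\<Sum>m\<in>S. snd (snd (snd m)))"
  shows "\<exists>t\<ge>t1. cview (loc (\<sigma> t) q) = Suc u"
proof (rule ccontr)
  assume never: "\<not> ?thesis"
  have stuck: "cview (loc (\<sigma> t) q) = u" if "t1 \<le> t" for t
  proof (rule ccontr)
    assume "cview (loc (\<sigma> t) q) \<noteq> u"
    then have "u < cview (loc (\<sigma> t) q)" using cview_mono[OF that, of q] view by simp
    then obtain c where "t1 \<le> c" "cview (loc (\<sigma> c) q) = u" "lab c = Install q"
      using Install_of_passed_view[of t1 q u t] view by auto
    then show False using never Install_transition(1)[of c q] le_SucI by metis
  qed
  obtain t4 where uninstalled: "u \<in> su_sent (loc (\<sigma> t4) q)"
    using eventually_uninstalls[OF q view cv] by blast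
  have "enabled n w (\<sigma> t) (Install q)" if t: "max t1 (max t3 t4) \<le> t" for t
  proof (rule Install_enabled)
    have "(\<Sum>m\<in>S. snd (snd (snd m))) \<le> su_weight (loc (\<sigma> t) q) u"
      using S su_rcvd_mono[of t3 t q] t
      by (intro sum_le_su_weight) (auto simp: su_rcvd_finite su_rcvd_weight_nonneg)
    then show "real n / 2 < su_weight (loc (\<sigma> t) q) (cview (loc (\<sigma> t) q))"
      using majority stuck t by simp
    show "cview (loc (\<sigma> t) q) \<in> su_sent (loc (\<sigma> t) q)"
      using uninstalled su_sent_mono[of t4 t q] stuck t by auto
  qed (use q in \<open>auto simp: correct_def su_rcvd_finite\<close>)
  then obtain t where "max t1 (max t3 t4) \<le> t" "lab t = Install q" using Install_fair by blast
  then show False using Install_transition(1)[of t q] stuck never le_SucI by fastforce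
qed

lemma correct_reaches_view:
  assumes q: "correct n \<sigma> q" and "cview (loc (\<sigma> t) p) = v" "u \<le> v"
  shows "\<exists>t'. cview (loc (\<sigma> t') q) = u"
  using assms(3)
proof (induction u)
  case 0
  have "cview (loc (\<sigma> 0) q) = 0" by (simp add: initial_state init_state_def)
  then show ?case ..
next
  case (Suc u)
  have "cview (loc (\<sigma> 0) p) \<le> u" by (simp add: initial_state init_state_def)
  then obtain c where "cview (loc (\<sigma> c) p) = u" "lab c = Install p"
    using Install_of_passed_view[of 0 p u t] assms(2) Suc.prems by auto
  then have uninstalled: "u \<in> su_sent (loc (\<sigma> c) p)"
    and majority: "real n / 2 < su_weight (loc (\<sigma> c) p) u"
    using Install_transition by metis+
  define S where "S = {m \<in> su_rcvd (loc (\<sigma> c) p). fst (snd (snd m)) = u}"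
  obtain t1 where t1: "cview (loc (\<sigma> t1) q) = u" using Suc by auto
  obtain t2 where t2: "Suc u \<in> cv_rcvd (loc (\<sigma> t2) q)"
    using receives_ChangeView[OF q] cv_sent_broadcast su_sent_broadcast uninstalled by blast
  have "finite S" using su_rcvd_finite by (simp add: S_def)
  moreover have "\<forall>(src, r, u', wt)\<in>S. broadcast src (StateUpdate r u' wt)"
    using su_rcvd_broadcast by (auto simp: S_def)
  ultimately obtain t3 where t3: "S \<subseteq> su_rcvd (loc (\<sigma> t3) q)"
    using receives_StateUpdates[OF q] by blast
  have "\<forall>m\<in>S. fst (snd (snd m)) = u" "real n / 2 < (\<Sum>m\<in>S. snd (snd (snd m)))"
    using majority by (auto simp: S_def su_weight_def)
  then show ?case using eventually_installs_next_view[OF q t1 t2 t3] by blast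
qed

lemma correct_installs_after_broadcast:
  assumes bc: "broadcast s (ChangeView (Suc v))"
    and C: "finite C" "C \<subseteq> {q. correct n \<sigma> q}" "\<forall>p\<in>C. \<exists>t. cview (loc (\<sigma> t) p) = v"
    and majority: "real n / 2 < (\<Sum>p\<in>C. w v p)"
    and q: "correct n \<sigma> q" and view: "cview (loc (\<sigma> t1) q) = v"
  shows "\<exists>t. cview (loc (\<sigma> t) q) = Suc v"
proof -
  have "\<exists>r. broadcast p (StateUpdate r v (w v p))" if "p \<in> C" for p
  proof -
    have p: "correct n \<sigma> p" using C \<open>p \<in> C\<close> by auto
    obtain tp where "cview (loc (\<sigma> tp) p) = v" using C \<open>p \<in> C\<close> by auto
    moreover obtain tc where "Suc v \<in> cv_rcvd (loc (\<sigma> tc) p)" using receives_ChangeView[OF p bc] by blast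
    ultimately obtain t where "v \<in> su_sent (loc (\<sigma> t) p)" using eventually_uninstalls[OF p] by blast
    then show ?thesis using su_sent_broadcast by blast
  qed
  then obtain r where r: "\<forall>p\<in>C. broadcast p (StateUpdate (r p) v (w v p))" by metis
  define S where "S = (\<lambda>p. (p, r p, v, w v p)) ` C"
  have weight: "(\<Sum>m\<in>S. snd (snd (snd m))) = (\<Sum>p\<in>C. w v p)"
    unfolding S_def by (subst sum.reindex) (auto simp: inj_on_def)
  have "finite S" using C(1) by (simp add: S_def)
  moreover have "\<forall>(src, r', u, wt)\<in>S. broadcast src (StateUpdate r' u wt)"
    using r by (auto simp: S_def)
  ultimately obtain t3 where t3: "S \<subseteq> su_rcvd (loc (\<sigma> t3) q)"
    using receives_StateUpdates[OF q] by blast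
  obtain t2 where t2: "Suc v \<in> cv_rcvd (loc (\<sigma> t2) q)" using receives_ChangeView[OF q bc] by blast
  have "\<forall>m\<in>S. fst (snd (snd m)) = v" by (simp add: S_def)
  then show ?thesis using eventually_installs_next_view[OF q view t2 t3] weight majority by auto
qed

end

theorem lemma5:
  fixes n f :: nat and w :: "nat \<Rightarrow> nat \<Rightarrow> real" and r0 :: "'val \<times> nat \<times> nat"
    and \<sigma> :: "nat \<Rightarrow> 'val gstate" and lab :: "nat \<Rightarrow> 'val event" and s v t :: nat
  assumes "2 * f + 1 \<le> n"
    and "\<forall>u. \<forall>q<n. real n / (2 * (real n - real f)) < w u q \<and> 2 * real f * w u q < real n"
    and "\<forall>u. (\<Sum>q<n. w u q) \<le> real n"
    and "execution n w r0 \<sigma> lab"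
    and "card {q. q < n \<and> (\<exists>t'. crashed (loc (\<sigma> t') q))} \<le> f"
    and "correct n \<sigma> s"
    and "sys_installed n (\<sigma> t) v"
    and "lab t = Timeout s" and "cview (loc (\<sigma> t) s) = v"
  shows "\<exists>M. M \<subseteq> {q. correct n \<sigma> q} \<and> s \<in> M \<and> (\<Sum>q\<in>M. w v q) > real n / 2 \<and>
             (\<forall>q\<in>M. \<exists>t'\<ge>t. cview (loc (\<sigma> t') q) = Suc v)"
proof -
  have "0 \<le> w u q" if "q < n" for u q
  proof -
    have "0 \<le> real n / (2 * (real n - real f))" using assms(1) by simp
    then show ?thesis using assms(2) that by (meson less_imp_le order.strict_trans1)
  qed
  then interpret view_change_execution n w r0 \<sigma> lab
    using assms(4) by unfold_locales
  let ?C = "{q. correct n \<sigma> q}"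
  have finite_correct: "finite ?C" by (rule finite_subset[of _ "{..<n}"]) (auto simp: correct_def)
  have majority: "real n / 2 < (\<Sum>q\<in>?C. w v q)"
    using weighted_majority[OF _ finite_correct card_correct_ge[OF assms(5)]] assms(1,2)
    by (auto simp: correct_def)
  obtain p where "cview (loc (\<sigma> t) p) = v" using assms(7) by (auto simp: sys_installed_def)
  then have reach: "\<forall>q\<in>?C. \<exists>t1. cview (loc (\<sigma> t1) q) = v" using correct_reaches_view by blast
  have bc: "broadcast s (ChangeView (Suc v))"
    using transition[of t] assms(8,9) by (intro broadcastI[of _ _ "Suc t"]) (auto simp: Let_def)
  have "\<exists>t'\<ge>t. cview (loc (\<sigma> t') q) = Suc v" if q: "q \<in> ?C" for q
  proof -
    obtain t' where t': "cview (loc (\<sigma> t') q) = Suc v"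
      using reach q correct_installs_after_broadcast[OF bc finite_correct _ reach majority] by blast
    have "cview (loc (\<sigma> t) q) \<le> v" using assms(7) q by (auto simp: sys_installed_def correct_def)
    then have "t \<le> t'" using cview_mono[of t' t q] t' by (cases "t \<le> t'") auto
    with t' show ?thesis by blast
  qed
  with majority assms(6) show ?thesis by (intro exI[of _ ?C]) auto
qed

end
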